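(* Let $(\pi_r)_{r\in\mathbb{N}}$ be periods and let $(K_t)_{t\in\mathbb{N}}$ be the multiperiodic process with periods $(\pi_r)$. Then $(K_t)$ is finite (i.e. $K_t<\infty$ for all $t\in\mathbb{N}$ almost surely) if and only if $$\sum_{r=1}^\infty\frac{1}{\pi_r}=\infty\quad\text{or}\quad \pi_s=1\text{ for some } s\in\mathbb{N}.$$
   Context: $\mathbb{N}=\{1,2,3,\dots\}$. Multiperiodic sequence with periods $\pi_r\in\mathbb{N}$ and seeds $\sigma_r\in\{1,\dots,\pi_r\}$: the sequence $(k_t)_{t\in\mathbb{N}}$ with values in $\mathbb{N}\cup\{\infty\}$ such that for each $r$, the subsequence obtained from $(k_t)$ by deleting all tokens $k_t<r$, denoted $(k^{(r)}_t)_{t\in\mathbb{N}}$, satisfies $k^{(r)}_t=r\iff t\equiv\sigma_r\pmod{\pi_r}$; entries left undefined for all $r$ are set to $\infty$. Equivalently: clocks $\phi_r$ start at $\sigma_r$; for each token, scan $r=1,2,\dots$, decrementing each clock with $\phi_r>1$, until the first $r$ with $\phi_r=1$, output that $r$ and reset $\phi_r=\pi_r$ (output $\infty$ if no such $r$ exists). The multiperiodic process with periods $(\pi_r)$ is the random multiperiodic sequence with these periods and independent random seeds $\Sigma_r$ with $P(\Sigma_r=i)=1/\pi_r$ for $i\in\{1,\dots,\pi_r\}$. *)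

theory Defs
  imports "HOL-Probability.Probability"
begin

text \<open>Periods pi r and seeds sigma r are indexed by r >= 1 (index 0 is unused).
  Clocks phi r are indexed by r >= 1 as well.\<close>

definition mp_fires :: "(nat \<Rightarrow> nat) \<Rightarrow> bool" where
  "mp_fires \<phi> \<longleftrightarrow> (\<exists>r\<ge>1. \<phi> r = 1)"

definition mp_first :: "(nat \<Rightarrow> nat) \<Rightarrow> nat" where
  "mp_first \<phi> = (LEAST r. 1 \<le> r \<and> \<phi> r = 1)"

definition mp_out :: "(nat \<Rightarrow> nat) \<Rightarrow> enat" where
  "mp_out \<phi> = (if mp_fires \<phi> then enat (mp_first \<phi>) else \<infinity>)"

definition mp_step :: "(nat \<Rightarrow> nat) \<Rightarrow> (nat \<Rightarrow> nat) \<Rightarrow> (nat \<Rightarrow> nat)" where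
  "mp_step \<pi> \<phi> =
     (if mp_fires \<phi> then
        (\<lambda>r. if 1 \<le> r \<and> r < mp_first \<phi> then \<phi> r - 1
             else if r = mp_first \<phi> then \<pi> r else \<phi> r)
      else (\<lambda>r. if 1 \<le> r then \<phi> r - 1 else \<phi> r))"

text \<open>Clock state before token t+1 (clocks start at the seeds).\<close>
primrec mp_clocks :: "(nat \<Rightarrow> nat) \<Rightarrow> (nat \<Rightarrow> nat) \<Rightarrow> nat \<Rightarrow> (nat \<Rightarrow> nat)" where
  "mp_clocks \<pi> \<sigma> 0 = \<sigma>"
| "mp_clocks \<pi> \<sigma> (Suc t) = mp_step \<pi> (mp_clocks \<pi> \<sigma> t)"

definition mp_seq :: "(nat \<Rightarrow> nat) \<Rightarrow> (nat \<Rightarrow> nat) \<Rightarrow> nat \<Rightarrow> enat" where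
  "mp_seq \<pi> \<sigma> t = mp_out (mp_clocks \<pi> \<sigma> (t - 1))"

definition mp_seed_measure :: "(nat \<Rightarrow> nat) \<Rightarrow> (nat \<Rightarrow> nat) measure" where
  "mp_seed_measure \<pi> = (\<Pi>\<^sub>M r\<in>{1..}. measure_pmf (pmf_of_set {1..\<pi> r}))"

end

theory Submission
  imports Defs
begin

text \<open>Restricted to the first \<open>n\<close> clocks, one step of the clock dynamics is a permutation
  of the finite state space \<open>\<Pi>\<^sub>E r\<in>{1..n}. {1..\<pi> r}\<close>: clock \<open>r\<close> is either left alone
  (a smaller clock fires) or shifted cyclically (\<open>1 \<mapsto> \<pi> r\<close>, \<open>z \<mapsto> z - 1\<close> otherwise), and the update of clock \<open>r\<close> only
  depends on clocks \<open>1..r\<close>. The seeds are uniform on this space, hence so are the clocks at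
  every time \<open>t\<close>, and the probability that none of the first \<open>n\<close> clocks reads 1 at time \<open>t\<close>
  is \<open>a\<^sub>n = \<Prod>r\<in>{1..n}. 1 - 1 / \<pi> r\<close>, whatever \<open>t\<close> is. Letting \<open>n \<rightarrow> \<infinity>\<close>, the token
  \<open>K\<^sub>t\<^sub>+\<^sub>1\<close> is infinite with probability \<open>lim a\<^sub>n\<close>, and by \<open>e\<^sup>-\<^sup>2\<^sup>x \<le> 1 - x \<le> e\<^sup>-\<^sup>x\<close>
  (for \<open>0 \<le> x \<le> 1/2\<close>) this limit vanishes iff \<open>\<Sum> 1 / \<pi> r = \<infinity>\<close> or some factor is 0.\<close>

lemma card_preimage_of_bij_betw:
  assumes bij: "bij_betw f A A" and "B \<subseteq> A"
  shows "card {x \<in> A. f x \<in> B} = card B"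
proof -
  have "f ` {x \<in> A. f x \<in> B} = B"
    using assms by (auto simp: bij_betw_def)
  then have "bij_betw f {x \<in> A. f x \<in> B} B"
    by (rule bij_betw_subset[OF bij, rotated]) auto
  then show ?thesis
    by (rule bij_betw_same_card)
qed

lemma exp_minus_twice_le_one_minus:
  fixes x :: real
  assumes "0 \<le> x" and "x \<le> 1 / 2"
  shows "exp (- 2 * x) \<le> 1 - x"
proof -
  have "- 2 * x \<le> - x - 2 * x\<^sup>2"
    using mult_left_mono[OF assms(2) assms(1)] by (simp add: power2_eq_square)
  also have "\<dots> \<le> ln (1 - x)"
    using assms by (rule ln_one_minus_pos_lower_bound)
  finally show ?thesis
    using assms by (simp add: ln_ge_iff[symmetric])
qed

lemma mp_step_apply:
  assumes "1 \<le> r"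
  shows "mp_step \<pi> \<phi> r =
    (if \<exists>s\<in>{1..<r}. \<phi> s = 1 then \<phi> r else if \<phi> r = 1 then \<pi> r else \<phi> r - 1)"
proof (cases "mp_fires \<phi>")
  case True
  then obtain s where s: "1 \<le> s" "\<phi> s = 1"
    unfolding mp_fires_def by auto
  have first: "1 \<le> mp_first \<phi> \<and> \<phi> (mp_first \<phi>) = 1"
    unfolding mp_first_def by (rule LeastI[of _ s]) (use s in auto)
  have least: "\<forall>s. 1 \<le> s \<and> \<phi> s = 1 \<longrightarrow> mp_first \<phi> \<le> s"
    unfolding mp_first_def by (auto intro: Least_le)
  show ?thesis
    using True assms first least unfolding mp_step_def
    by (auto simp: not_less le_antisym)
next
  case False
  then show ?thesis
    using assms unfolding mp_step_def mp_fires_def by auto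
qed

lemma mp_step_cong:
  assumes "\<And>s. s \<in> {1..r} \<Longrightarrow> \<phi> s = \<psi> s" and "1 \<le> r"
  shows "mp_step \<pi> \<phi> r = mp_step \<pi> \<psi> r"
  using assms by (simp add: mp_step_apply)

definition truncated_step :: "(nat \<Rightarrow> nat) \<Rightarrow> nat \<Rightarrow> (nat \<Rightarrow> nat) \<Rightarrow> (nat \<Rightarrow> nat)" where
  "truncated_step \<pi> n \<phi> = restrict (mp_step \<pi> \<phi>) {1..n}"

lemma restrict_mp_clocks:
  "restrict (mp_clocks \<pi> \<sigma> t) {1..n} = (truncated_step \<pi> n ^^ t) (restrict \<sigma> {1..n})"
proof (induction t)
  case (Suc t)
  have "restrict (mp_clocks \<pi> \<sigma> (Suc t)) {1..n}
      = truncated_step \<pi> n (restrict (mp_clocks \<pi> \<sigma> t) {1..n})"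
    unfolding truncated_step_def by (auto intro!: restrict_ext mp_step_cong)
  with Suc.IH show ?case
    by (simp del: restrict_apply)
qed simp

lemma mp_seq_finite_iff_fires:
  "(\<forall>t\<ge>1. mp_seq \<pi> \<sigma> t < \<infinity>) \<longleftrightarrow> (\<forall>t. mp_fires (mp_clocks \<pi> \<sigma> t))"
proof (intro iffI allI impI)
  fix t
  assume "\<forall>t\<ge>1. mp_seq \<pi> \<sigma> t < \<infinity>"
  then have "mp_seq \<pi> \<sigma> (Suc t) < \<infinity>"
    by simp
  then show "mp_fires (mp_clocks \<pi> \<sigma> t)"
    by (simp add: mp_seq_def mp_out_def split: if_splits)
qed (simp add: mp_seq_def mp_out_def)

locale period_sequence =
  fixes \<pi> :: "nat \<Rightarrow> nat"
  assumes period_pos: "1 \<le> r \<Longrightarrow> 1 \<le> \<pi> r"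
begin

abbreviation seed_law :: "nat \<Rightarrow> nat measure" where
  "seed_law r \<equiv> measure_pmf (pmf_of_set {1..\<pi> r})"

sublocale seeds: product_prob_space seed_law "{1..}"
  by unfold_locales

definition clock_states :: "nat \<Rightarrow> (nat \<Rightarrow> nat) set" where
  "clock_states n = (\<Pi>\<^sub>E r\<in>{1..n}. {1..\<pi> r})"

definition quiet_states :: "nat \<Rightarrow> (nat \<Rightarrow> nat) set" where
  "quiet_states n = (\<Pi>\<^sub>E r\<in>{1..n}. {2..\<pi> r})"

lemma finite_clock_states: "finite (clock_states n)"
  by (simp add: clock_states_def finite_PiE)

lemma truncated_step_in_clock_states:
  "x \<in> clock_states n \<Longrightarrow> truncated_step \<pi> n x \<in> clock_states n"
  using period_pos by (auto simp: clock_states_def truncated_step_def mp_step_apply PiE_iff)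

text \<open>By induction on the clock index: once clocks \<open>1..<r\<close> agree, clock \<open>r\<close> is either frozen
  in both states or moved by the same cyclic permutation of \<open>{1..\<pi> r}\<close>.\<close>

lemma inj_on_truncated_step: "inj_on (truncated_step \<pi> n) (clock_states n)"
proof
  fix x y
  assume x: "x \<in> clock_states n" and y: "y \<in> clock_states n"
    and eq: "truncated_step \<pi> n x = truncated_step \<pi> n y"
  have "x r = y r" if "r \<in> {1..n}" for r
    using that
  proof (induction r rule: less_induct)
    case (less r)
    have "(\<exists>s\<in>{1..<r}. x s = 1) \<longleftrightarrow> (\<exists>s\<in>{1..<r}. y s = 1)"
      using less by force
    moreover have "mp_step \<pi> x r = mp_step \<pi> y r"
      using eq less.prems unfolding truncated_step_def by (metis restrict_apply')
    moreover have "x r \<in> {1..\<pi> r}" "y r \<in> {1..\<pi> r}"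
      using x y less.prems by (auto simp: clock_states_def)
    ultimately show ?case
      using less.prems by (auto simp: mp_step_apply split: if_splits)
  qed
  with x y show "x = y"
    unfolding clock_states_def by (auto intro: PiE_ext)
qed

lemma bij_betw_truncated_step_funpow:
  "bij_betw (truncated_step \<pi> n ^^ t) (clock_states n) (clock_states n)"
proof -
  have "truncated_step \<pi> n ` clock_states n = clock_states n"
    using endo_inj_surj[OF finite_clock_states _ inj_on_truncated_step] truncated_step_in_clock_states
    by blast
  then show ?thesis
    using inj_on_truncated_step by (intro bij_betw_funpow) (simp add: bij_betw_def)
qed

lemma singleton_clock_state: "x \<in> clock_states n \<Longrightarrow> {x} = (\<Pi>\<^sub>E r\<in>{1..n}. {x r})"
  by (simp add: clock_states_def PiE_iff PiE_singleton)

lemma sets_clock_states_subset: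
  assumes "C \<subseteq> clock_states n"
  shows "C \<in> sets (\<Pi>\<^sub>M r\<in>{1..n}. seed_law r)"
proof -
  have "C = (\<Union>x\<in>C. {x})"
    by simp
  also have "\<dots> \<in> sets (\<Pi>\<^sub>M r\<in>{1..n}. seed_law r)"
    using assms finite_subset[OF assms finite_clock_states]
    by (intro sets.finite_UN) (auto simp: singleton_clock_state)
  finally show ?thesis .
qed

lemma emeasure_seed_cylinder:
  assumes C: "C \<subseteq> clock_states n"
  shows "emeasure (mp_seed_measure \<pi>) (prod_emb {1..} seed_law {1..n} C)
           = ennreal (card C / (\<Prod>r\<in>{1..n}. real (\<pi> r)))"
proof -
  have point: "emeasure (\<Pi>\<^sub>M r\<in>{1..n}. seed_law r) {x} = ennreal (1 / (\<Prod>r\<in>{1..n}. real (\<pi> r)))"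
    if x: "x \<in> clock_states n" for x
  proof -
    have "emeasure (\<Pi>\<^sub>M r\<in>{1..n}. seed_law r) {x} = (\<Prod>r\<in>{1..n}. emeasure (seed_law r) {x r})"
      unfolding singleton_clock_state[OF x] by (rule seeds.emeasure_PiM) auto
    also have "\<dots> = (\<Prod>r\<in>{1..n}. ennreal (1 / real (\<pi> r)))"
    proof (rule prod.cong)
      fix r
      assume "r \<in> {1..n}"
      then have "x r \<in> {1..\<pi> r}"
        using x by (auto simp: clock_states_def)
      then show "emeasure (seed_law r) {x r} = ennreal (1 / real (\<pi> r))"
        by (simp add: emeasure_pmf_single)
    qed simp
    finally show ?thesis
      by (simp add: prod_ennreal prod_dividef)
  qed
  have "emeasure (mp_seed_measure \<pi>) (prod_emb {1..} seed_law {1..n} C)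
      = emeasure (\<Pi>\<^sub>M r\<in>{1..n}. seed_law r) C"
    unfolding mp_seed_measure_def using sets_clock_states_subset[OF C]
    by (intro seeds.emeasure_PiM_emb') auto
  also have "\<dots> = (\<Sum>x\<in>C. emeasure (\<Pi>\<^sub>M r\<in>{1..n}. seed_law r) {x})"
  proof (rule emeasure_eq_sum_singleton)
    show "finite C"
      using C finite_clock_states by (rule finite_subset)
    show "{x} \<in> sets (\<Pi>\<^sub>M r\<in>{1..n}. seed_law r)" if "x \<in> C" for x
      using C that by (intro sets_clock_states_subset) auto
  qed
  also have "\<dots> = (\<Sum>x\<in>C. ennreal (1 / (\<Prod>r\<in>{1..n}. real (\<pi> r))))"
    using C point by (intro sum.cong) auto
  also have "\<dots> = ennreal (card C / (\<Prod>r\<in>{1..n}. real (\<pi> r)))"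
    by (simp add: ennreal_of_nat_eq_real_of_nat ennreal_mult'[symmetric])
  finally show ?thesis .
qed

definition no_fire_prob :: "nat \<Rightarrow> real" where
  "no_fire_prob n = (\<Prod>r\<in>{1..n}. 1 - 1 / real (\<pi> r))"

text \<open>The range condition on the seeds holds almost surely; it makes \<open>no_fire_event t n\<close> a
  cylinder over a subset of \<open>clock_states n\<close>.\<close>

definition no_fire_event :: "nat \<Rightarrow> nat \<Rightarrow> (nat \<Rightarrow> nat) set" where
  "no_fire_event t n = {\<sigma> \<in> space (mp_seed_measure \<pi>).
     \<forall>r\<in>{1..n}. \<sigma> r \<in> {1..\<pi> r} \<and> mp_clocks \<pi> \<sigma> t r \<noteq> 1}"

lemma no_fire_prob_nonneg: "0 \<le> no_fire_prob n"
  unfolding no_fire_prob_def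
proof (rule prod_nonneg)
  fix r
  assume "r \<in> {1..n}"
  then have "1 \<le> real (\<pi> r)"
    using period_pos by simp
  then show "0 \<le> 1 - 1 / real (\<pi> r)"
    by simp
qed

lemma quiet_states_iff:
  assumes "x \<in> clock_states n"
  shows "x \<in> quiet_states n \<longleftrightarrow> (\<forall>r\<in>{1..n}. x r \<noteq> 1)"
proof -
  have "x r \<in> {2..\<pi> r} \<longleftrightarrow> x r \<noteq> 1" if "r \<in> {1..n}" for r
  proof -
    have "x r \<in> {1..\<pi> r}"
      using assms that by (auto simp: clock_states_def)
    then show ?thesis
      by auto
  qed
  with assms show ?thesis
    by (auto simp: clock_states_def quiet_states_def PiE_iff)
qed

lemma no_fire_event_eq_cylinder:
  "no_fire_event t n = prod_emb {1..} seed_law {1..n}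
     {x \<in> clock_states n. (truncated_step \<pi> n ^^ t) x \<in> quiet_states n}"
proof -
  have "(truncated_step \<pi> n ^^ t) (restrict \<sigma> {1..n}) \<in> quiet_states n
      \<longleftrightarrow> (\<forall>r\<in>{1..n}. mp_clocks \<pi> \<sigma> t r \<noteq> 1)"
    if "restrict \<sigma> {1..n} \<in> clock_states n" for \<sigma>
  proof -
    have "restrict (mp_clocks \<pi> \<sigma> t) {1..n} \<in> clock_states n"
      using that bij_betw_truncated_step_funpow unfolding restrict_mp_clocks bij_betw_def by blast
    then show ?thesis
      unfolding restrict_mp_clocks[symmetric] by (subst quiet_states_iff) auto
  qed
  then show ?thesis
    by (auto simp: no_fire_event_def prod_emb_iff mp_seed_measure_def space_PiM clock_states_def PiE_iff)
qed

lemma no_fire_event_in_sets: "no_fire_event t n \<in> sets (mp_seed_measure \<pi>)"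
  unfolding no_fire_event_eq_cylinder mp_seed_measure_def
  by (intro measurable_prod_emb sets_clock_states_subset) auto

lemma emeasure_no_fire_event:
  "emeasure (mp_seed_measure \<pi>) (no_fire_event t n) = ennreal (no_fire_prob n)"
proof -
  let ?C = "{x \<in> clock_states n. (truncated_step \<pi> n ^^ t) x \<in> quiet_states n}"
  have "quiet_states n \<subseteq> clock_states n"
    unfolding quiet_states_def clock_states_def by (intro PiE_mono) auto
  then have "card ?C = card (quiet_states n)"
    by (intro card_preimage_of_bij_betw bij_betw_truncated_step_funpow)
  then have "real (card ?C) = (\<Prod>r\<in>{1..n}. real (\<pi> r) - 1)"
    using period_pos by (simp add: quiet_states_def card_PiE of_nat_diff)
  moreover have "no_fire_prob n = (\<Prod>r\<in>{1..n}. (real (\<pi> r) - 1) / real (\<pi> r))"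
    unfolding no_fire_prob_def using period_pos
    by (intro prod.cong) (auto simp: diff_divide_distrib Suc_le_eq)
  ultimately have "no_fire_prob n = real (card ?C) / (\<Prod>r\<in>{1..n}. real (\<pi> r))"
    by (simp only: prod_dividef)
  then show ?thesis
    unfolding no_fire_event_eq_cylinder by (subst emeasure_seed_cylinder) auto
qed

lemma no_fire_prob_tendsto_emeasure:
  "(\<lambda>n. ennreal (no_fire_prob n)) \<longlonglongrightarrow> emeasure (mp_seed_measure \<pi>) (\<Inter>n. no_fire_event t n)"
proof -
  have "decseq (no_fire_event t)"
    by (intro decseq_SucI) (auto simp: no_fire_event_def)
  then have "(\<lambda>n. emeasure (mp_seed_measure \<pi>) (no_fire_event t n))
      \<longlonglongrightarrow> emeasure (mp_seed_measure \<pi>) (\<Inter>n. no_fire_event t n)"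
    by (intro Lim_emeasure_decseq) (auto simp: no_fire_event_in_sets emeasure_no_fire_event)
  then show ?thesis
    by (simp add: emeasure_no_fire_event)
qed

lemma Inter_no_fire_event:
  "(\<Inter>n. no_fire_event t n) = {\<sigma> \<in> space (mp_seed_measure \<pi>).
     \<forall>r\<ge>1. \<sigma> r \<in> {1..\<pi> r} \<and> mp_clocks \<pi> \<sigma> t r \<noteq> 1}"
proof (intro equalityI subsetI)
  fix \<sigma>
  assume \<sigma>: "\<sigma> \<in> (\<Inter>n. no_fire_event t n)"
  have "\<sigma> r \<in> {1..\<pi> r} \<and> mp_clocks \<pi> \<sigma> t r \<noteq> 1" if "1 \<le> r" for r
  proof -
    have "\<sigma> \<in> no_fire_event t r" and "r \<in> {1..r}"
      using \<sigma> that by auto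
    then show ?thesis
      unfolding no_fire_event_def by blast
  qed
  moreover have "\<sigma> \<in> space (mp_seed_measure \<pi>)"
    using \<sigma> unfolding no_fire_event_def by blast
  ultimately show "\<sigma> \<in> {\<sigma> \<in> space (mp_seed_measure \<pi>).
      \<forall>r\<ge>1. \<sigma> r \<in> {1..\<pi> r} \<and> mp_clocks \<pi> \<sigma> t r \<noteq> 1}"
    by blast
qed (auto simp: no_fire_event_def)

lemma AE_seed_in_range: "AE \<sigma> in mp_seed_measure \<pi>. \<forall>r\<ge>1. \<sigma> r \<in> {1..\<pi> r}"
proof -
  have "AE \<sigma> in mp_seed_measure \<pi>. \<sigma> r \<in> {1..\<pi> r}" if "1 \<le> r" for r
  proof -
    have "AE x in seed_law r. x \<in> {1..\<pi> r}"
      using that period_pos by (simp add: AE_measure_pmf_iff)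
    then show ?thesis
      unfolding mp_seed_measure_def using that by (intro seeds.AE_component) auto
  qed
  then show ?thesis
    by (subst AE_all_countable) auto
qed

lemma AE_fires_iff_no_fire_prob_tendsto_0:
  "(AE \<sigma> in mp_seed_measure \<pi>. mp_fires (mp_clocks \<pi> \<sigma> t)) \<longleftrightarrow> no_fire_prob \<longlonglongrightarrow> 0"
proof -
  have "(AE \<sigma> in mp_seed_measure \<pi>. mp_fires (mp_clocks \<pi> \<sigma> t))
      \<longleftrightarrow> (AE \<sigma> in mp_seed_measure \<pi>. (\<forall>r\<ge>1. \<sigma> r \<in> {1..\<pi> r}) \<longrightarrow> mp_fires (mp_clocks \<pi> \<sigma> t))"
    using AE_seed_in_range by (auto elim: AE_mp)
  also have "\<dots> \<longleftrightarrow> emeasure (mp_seed_measure \<pi>) (\<Inter>n. no_fire_event t n) = 0"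
  proof (rule AE_iff_measurable)
    show "(\<Inter>n. no_fire_event t n) \<in> sets (mp_seed_measure \<pi>)"
      using no_fire_event_in_sets by auto
    show "{\<sigma> \<in> space (mp_seed_measure \<pi>).
        \<not> ((\<forall>r\<ge>1. \<sigma> r \<in> {1..\<pi> r}) \<longrightarrow> mp_fires (mp_clocks \<pi> \<sigma> t))} = (\<Inter>n. no_fire_event t n)"
      unfolding Inter_no_fire_event mp_fires_def by auto
  qed
  also have "\<dots> \<longleftrightarrow> (\<lambda>n. ennreal (no_fire_prob n)) \<longlonglongrightarrow> 0"
    using no_fire_prob_tendsto_emeasure LIMSEQ_unique by metis
  also have "\<dots> \<longleftrightarrow> no_fire_prob \<longlonglongrightarrow> 0"
    using tendsto_ennreal_iff[of no_fire_prob sequentially 0] no_fire_prob_nonneg by simp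
  finally show ?thesis .
qed

lemma sum_reciprocal_periods_eq:
  "(\<Sum>r\<in>{1..n}. 1 / real (\<pi> r)) = (\<Sum>k<n. 1 / real (\<pi> (Suc k)))"
  by (simp add: sum.atLeast1_atMost_eq)

lemma no_fire_prob_le_exp: "no_fire_prob n \<le> exp (- (\<Sum>r\<in>{1..n}. 1 / real (\<pi> r)))"
proof -
  have "no_fire_prob n \<le> (\<Prod>r\<in>{1..n}. exp (- (1 / real (\<pi> r))))"
    unfolding no_fire_prob_def
  proof (rule prod_mono)
    fix r
    assume "r \<in> {1..n}"
    then have "1 \<le> real (\<pi> r)"
      using period_pos by simp
    then show "0 \<le> 1 - 1 / real (\<pi> r) \<and> 1 - 1 / real (\<pi> r) \<le> exp (- (1 / real (\<pi> r)))"
      using exp_ge_add_one_self[of "- (1 / real (\<pi> r))"] by simp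
  qed
  then show ?thesis
    by (simp add: exp_sum[symmetric] sum_negf)
qed

lemma exp_le_no_fire_prob:
  assumes "\<And>r. 1 \<le> r \<Longrightarrow> 2 \<le> \<pi> r"
  shows "exp (- 2 * (\<Sum>r\<in>{1..n}. 1 / real (\<pi> r))) \<le> no_fire_prob n"
proof -
  have "exp (- 2 * (\<Sum>r\<in>{1..n}. 1 / real (\<pi> r))) = (\<Prod>r\<in>{1..n}. exp (- 2 * (1 / real (\<pi> r))))"
    by (simp add: exp_sum[symmetric] sum_distrib_left)
  also have "\<dots> \<le> no_fire_prob n"
    unfolding no_fire_prob_def
  proof (rule prod_mono)
    fix r
    assume "r \<in> {1..n}"
    then have "2 \<le> real (\<pi> r)"
      using assms by simp
    then have "0 \<le> 1 / real (\<pi> r)" "1 / real (\<pi> r) \<le> 1 / 2"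
      by (auto simp: field_simps)
    then have "exp (- 2 * (1 / real (\<pi> r))) \<le> 1 - 1 / real (\<pi> r)"
      by (rule exp_minus_twice_le_one_minus)
    then show "0 \<le> exp (- 2 * (1 / real (\<pi> r))) \<and> exp (- 2 * (1 / real (\<pi> r))) \<le> 1 - 1 / real (\<pi> r)"
      by simp
  qed
  finally show ?thesis .
qed

lemma no_fire_prob_tendsto_0_iff:
  "no_fire_prob \<longlonglongrightarrow> 0 \<longleftrightarrow> \<not> summable (\<lambda>r. 1 / real (\<pi> (Suc r))) \<or> (\<exists>s\<ge>1. \<pi> s = 1)"
proof
  assume lim: "no_fire_prob \<longlonglongrightarrow> 0"
  show "\<not> summable (\<lambda>r. 1 / real (\<pi> (Suc r))) \<or> (\<exists>s\<ge>1. \<pi> s = 1)"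
  proof (rule ccontr)
    assume "\<not> ?thesis"
    then have summable: "summable (\<lambda>r. 1 / real (\<pi> (Suc r)))" and not_one: "\<forall>s\<ge>1. \<pi> s \<noteq> 1"
      by auto
    have "2 \<le> \<pi> r" if "1 \<le> r" for r
    proof -
      have "\<pi> r \<noteq> 1"
        using not_one that by blast
      with period_pos[OF that] show ?thesis
        by linarith
    qed
    have "exp (- 2 * suminf (\<lambda>r. 1 / real (\<pi> (Suc r)))) \<le> no_fire_prob n" for n
    proof -
      have "(\<Sum>r\<in>{1..n}. 1 / real (\<pi> r)) \<le> suminf (\<lambda>r. 1 / real (\<pi> (Suc r)))"
        unfolding sum_reciprocal_periods_eq by (rule sum_le_suminf[OF summable]) auto
      then have "exp (- 2 * suminf (\<lambda>r. 1 / real (\<pi> (Suc r))))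
          \<le> exp (- 2 * (\<Sum>r\<in>{1..n}. 1 / real (\<pi> r)))"
        by simp
      also have "\<dots> \<le> no_fire_prob n"
        by (rule exp_le_no_fire_prob) fact
      finally show ?thesis .
    qed
    with lim have "exp (- 2 * suminf (\<lambda>r. 1 / real (\<pi> (Suc r)))) \<le> 0"
      by (intro LIMSEQ_le_const) auto
    then show False
      by simp
  qed
next
  assume "\<not> summable (\<lambda>r. 1 / real (\<pi> (Suc r))) \<or> (\<exists>s\<ge>1. \<pi> s = 1)"
  then consider "\<not> summable (\<lambda>r. 1 / real (\<pi> (Suc r)))" | s where "1 \<le> s" "\<pi> s = 1"
    by blast
  then show "no_fire_prob \<longlonglongrightarrow> 0"
  proof cases
    case 1
    show ?thesis
    proof (rule LIMSEQ_I)
      fix \<epsilon> :: real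
      assume "0 < \<epsilon>"
      have "\<not> (\<forall>M. (\<Sum>k\<le>M. 1 / real (\<pi> (Suc k))) \<le> - ln \<epsilon>)"
        using 1 bounded_imp_summable[of "\<lambda>k. 1 / real (\<pi> (Suc k))" "- ln \<epsilon>"] by auto
      then obtain M where "- ln \<epsilon> < (\<Sum>k\<le>M. 1 / real (\<pi> (Suc k)))"
        by (auto simp: not_le)
      then have M: "- ln \<epsilon> < (\<Sum>r\<in>{1..Suc M}. 1 / real (\<pi> r))"
        by (simp only: sum_reciprocal_periods_eq lessThan_Suc_atMost)
      have "norm (no_fire_prob n - 0) < \<epsilon>" if "Suc M \<le> n" for n
      proof -
        have "(\<Sum>r\<in>{1..Suc M}. 1 / real (\<pi> r)) \<le> (\<Sum>r\<in>{1..n}. 1 / real (\<pi> r))"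
          using that by (intro sum_mono2) auto
        with M have "exp (- (\<Sum>r\<in>{1..n}. 1 / real (\<pi> r))) < exp (ln \<epsilon>)"
          by simp
        then show ?thesis
          using \<open>0 < \<epsilon>\<close> no_fire_prob_le_exp[of n] no_fire_prob_nonneg[of n] by simp
      qed
      then show "\<exists>N. \<forall>n\<ge>N. norm (no_fire_prob n - 0) < \<epsilon>"
        by blast
    qed
  next
    case 2
    have "no_fire_prob n = 0" if "s \<le> n" for n
      using 2 that unfolding no_fire_prob_def by (intro prod_zero bexI[of _ s]) auto
    then show ?thesis
      by (intro tendsto_eventually) (auto simp: eventually_at_top_linorder)
  qed
qed

end

theorem theorem3:
  fixes \<pi> :: "nat \<Rightarrow> nat"
  assumes periods: "\<forall>r\<ge>1. \<pi> r \<ge> 1"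
  shows "(AE \<sigma> in mp_seed_measure \<pi>. \<forall>t\<ge>1. mp_seq \<pi> \<sigma> t < \<infinity>)
         \<longleftrightarrow> (\<not> summable (\<lambda>r. 1 / real (\<pi> (Suc r))) \<or> (\<exists>s\<ge>1. \<pi> s = 1))"
proof -
  interpret period_sequence \<pi>
    using periods by unfold_locales auto
  have "(AE \<sigma> in mp_seed_measure \<pi>. \<forall>t\<ge>1. mp_seq \<pi> \<sigma> t < \<infinity>)
      \<longleftrightarrow> (\<forall>t. AE \<sigma> in mp_seed_measure \<pi>. mp_fires (mp_clocks \<pi> \<sigma> t))"
    unfolding mp_seq_finite_iff_fires by (rule AE_all_countable)
  also have "\<dots> \<longleftrightarrow> no_fire_prob \<longlonglongrightarrow> 0"
    by (simp add: AE_fires_iff_no_fire_prob_tendsto_0)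
  also have "\<dots> \<longleftrightarrow> \<not> summable (\<lambda>r. 1 / real (\<pi> (Suc r))) \<or> (\<exists>s\<ge>1. \<pi> s = 1)"
    by (rule no_fire_prob_tendsto_0_iff)
  finally show ?thesis .
qed

end
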